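(* Consider finite games in which all players have the same nonnegative utility function $u$ with $\max_S u>0$, with the solution set being the set $\mathrm{NE}$ of pure Nash equilibria. For every such game, $\mathrm{PoS}=\mathrm{PoTS}=1$. On the other hand, for every $\varepsilon>0$ there is such a game with $\mathrm{PoA}<\varepsilon$, and for every $\delta>0$ there is such a game with $\mathrm{PoA}>0$ and $\mathrm{PoTA}\le\mathrm{PoSTA}\le\delta\cdot\mathrm{PoA}$.
   Context: $\mathrm{sw}(s)=\sum_iu_i(s)$. A transition of $\mathrm{NE}$ is a profile $t$ with $t_i=d_i$ for some $d\in\mathrm{NE}$, for every $i$; $T(\mathrm{NE})$ is the set of transitions. $\mathrm{BR}_i(s_{-i})$ is the set of best responses of $i$. A stable transition is $s\in T(\mathrm{NE})$ such that for every $i$ with $s_i\notin\mathrm{BR}_i(s_{-i})$ there is $j\neq i$ with $s_j\notin\mathrm{BR}_j(s_{-j})$ and some $\hat s_j\in\mathrm{BR}_j(s_{-j})$ with $s_i\in\mathrm{BR}_i(\hat s_j,s_{-\{i,j\}})$; $ST(\mathrm{NE})$ is the set of stable transitions. $\mathrm{PoA}=\min_{\mathrm{NE}}\mathrm{sw}/\max_S\mathrm{sw}$, $\mathrm{PoS}=\max_{\mathrm{NE}}\mathrm{sw}/\max_S\mathrm{sw}$, $\mathrm{PoTA}=\min_{T(\mathrm{NE})}\mathrm{sw}/\max_S\mathrm{sw}$, $\mathrm{PoTS}=\max_{T(\mathrm{NE})}\mathrm{sw}/\max_S\mathrm{sw}$, $\mathrm{PoSTA}=\min_{ST(\mathrm{NE})}\mathrm{sw}/\max_S\mathrm{sw}$.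 *)

theory Defs
  imports Complex_Main "HOL-Library.FuncSet"
begin

text \<open>A finite game with players 0..n-1, finite strategy sets S i, and one common
  utility function u shared by all players (u_i = u for every i).
  Profiles are the extensional functions in PiE {..<n} S.\<close>

definition profiles :: "nat \<Rightarrow> (nat \<Rightarrow> 'a set) \<Rightarrow> (nat \<Rightarrow> 'a) set" where
  "profiles n S = PiE {..<n} S"

definition common_game :: "nat \<Rightarrow> (nat \<Rightarrow> 'a set) \<Rightarrow> ((nat \<Rightarrow> 'a) \<Rightarrow> real) \<Rightarrow> bool" where
  "common_game n S u \<longleftrightarrow> n \<ge> 1 \<and> (\<forall>i<n. finite (S i) \<and> S i \<noteq> {})
     \<and> (\<forall>s\<in>profiles n S. 0 \<le> u s) \<and> Max (u ` profiles n S) > 0"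

definition sw :: "nat \<Rightarrow> ((nat \<Rightarrow> 'a) \<Rightarrow> real) \<Rightarrow> (nat \<Rightarrow> 'a) \<Rightarrow> real" where
  "sw n u s = (\<Sum>i<n. u s)"

definition NE :: "nat \<Rightarrow> (nat \<Rightarrow> 'a set) \<Rightarrow> ((nat \<Rightarrow> 'a) \<Rightarrow> real) \<Rightarrow> (nat \<Rightarrow> 'a) set" where
  "NE n S u = {s \<in> profiles n S. \<forall>i<n. \<forall>t\<in>S i. u (s(i := t)) \<le> u s}"

definition BR :: "(nat \<Rightarrow> 'a set) \<Rightarrow> ((nat \<Rightarrow> 'a) \<Rightarrow> real) \<Rightarrow> nat \<Rightarrow> (nat \<Rightarrow> 'a) \<Rightarrow> 'a set" where
  "BR S u i s = {t \<in> S i. \<forall>t'\<in>S i. u (s(i := t')) \<le> u (s(i := t))}"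

definition TNE :: "nat \<Rightarrow> (nat \<Rightarrow> 'a set) \<Rightarrow> ((nat \<Rightarrow> 'a) \<Rightarrow> real) \<Rightarrow> (nat \<Rightarrow> 'a) set" where
  "TNE n S u = {t \<in> profiles n S. \<forall>i<n. \<exists>d\<in>NE n S u. t i = d i}"

definition STNE :: "nat \<Rightarrow> (nat \<Rightarrow> 'a set) \<Rightarrow> ((nat \<Rightarrow> 'a) \<Rightarrow> real) \<Rightarrow> (nat \<Rightarrow> 'a) set" where
  "STNE n S u = {s \<in> TNE n S u. \<forall>i<n. s i \<notin> BR S u i s \<longrightarrow>
      (\<exists>j<n. j \<noteq> i \<and> s j \<notin> BR S u j s \<and>
         (\<exists>sj\<in>BR S u j s. s i \<in> BR S u i (s(j := sj))))}"

definition opt_sw :: "nat \<Rightarrow> (nat \<Rightarrow> 'a set) \<Rightarrow> ((nat \<Rightarrow> 'a) \<Rightarrow> real) \<Rightarrow> real" where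
  "opt_sw n S u = Max (sw n u ` profiles n S)"

definition PoA where "PoA n S u = Min (sw n u ` NE n S u) / opt_sw n S u"
definition PoS where "PoS n S u = Max (sw n u ` NE n S u) / opt_sw n S u"
definition PoTA where "PoTA n S u = Min (sw n u ` TNE n S u) / opt_sw n S u"
definition PoTS where "PoTS n S u = Max (sw n u ` TNE n S u) / opt_sw n S u"
definition PoSTA where "PoSTA n S u = Min (sw n u ` STNE n S u) / opt_sw n S u"

end

theory Submission
  imports Defs
begin

text \<open>With a common utility every profile maximising u is a Nash equilibrium, so the best
  equilibrium (and hence the best transition) is socially optimal. For the lower bounds take the
  two-player coordination game paying 1 on (0,0), e on (1,1) and 0 off the diagonal: its worst
  equilibrium (1,1) has ratio e, while the miscoordinated profile (0,1) mixes the strategies of the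
  two equilibria, is a stable transition (each player would best respond by copying the other, and
  each one's strategy is a best response to the other's best response) and has welfare 0.\<close>

lemma sw_eq_mult: "sw n u s = real n * u s"
  by (simp add: sw_def)

lemma fun_upd_in_profiles: "s \<in> profiles n S \<Longrightarrow> i < n \<Longrightarrow> t \<in> S i \<Longrightarrow> s(i := t) \<in> profiles n S"
  unfolding profiles_def PiE_iff extensional_def by simp

lemma NE_subset_profiles: "NE n S u \<subseteq> profiles n S"
  unfolding NE_def by auto

lemma TNE_subset_profiles: "TNE n S u \<subseteq> profiles n S"
  unfolding TNE_def by auto

lemma STNE_subset_TNE: "STNE n S u \<subseteq> TNE n S u"
  unfolding STNE_def by auto

lemma NE_subset_TNE: "NE n S u \<subseteq> TNE n S u"
  unfolding TNE_def using NE_subset_profiles by blast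

lemma maximizer_in_NE:
  assumes "s \<in> profiles n S" and "\<forall>y\<in>profiles n S. u y \<le> u s"
  shows "s \<in> NE n S u"
  unfolding NE_def using assms fun_upd_in_profiles[OF assms(1)] by simp

lemma common_game_finite_profiles: "common_game n S u \<Longrightarrow> finite (profiles n S)"
  unfolding common_game_def profiles_def by (intro finite_PiE) auto

lemma common_game_obtains_maximizer:
  assumes "common_game n S u"
  obtains s where "s \<in> profiles n S" "\<forall>y\<in>profiles n S. u y \<le> u s" "u s > 0"
proof -
  have "profiles n S \<noteq> {}"
    using assms unfolding common_game_def profiles_def by (simp add: PiE_eq_empty_iff)
  then have "Max (u ` profiles n S) \<in> u ` profiles n S"
    using common_game_finite_profiles[OF assms] by (intro Max_in) auto
  then obtain s where "s \<in> profiles n S" "u s = Max (u ` profiles n S)"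
    by (metis imageE)
  with assms common_game_finite_profiles[OF assms] show thesis
    by (intro that) (auto simp: common_game_def)
qed

lemma Max_sw_eq_opt_sw:
  assumes game: "common_game n S u" and "NE n S u \<subseteq> A" "A \<subseteq> profiles n S"
  shows "Max (sw n u ` A) = opt_sw n S u"
proof -
  obtain s where s: "s \<in> profiles n S" "\<forall>y\<in>profiles n S. u y \<le> u s"
    using common_game_obtains_maximizer[OF game] by blast
  have "s \<in> A" using maximizer_in_NE[OF s] assms(2) by blast
  have sw_le: "\<forall>y\<in>profiles n S. sw n u y \<le> sw n u s"
    using s(2) by (simp add: sw_eq_mult mult_left_mono)
  have fin: "finite (profiles n S)" using common_game_finite_profiles[OF game] .
  have "Max (sw n u ` A) = sw n u s"
    using \<open>s \<in> A\<close> assms(3) sw_le finite_subset[OF assms(3) fin] by (intro Max_eqI) auto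
  also have "\<dots> = opt_sw n S u"
    unfolding opt_sw_def using s(1) sw_le fin by (intro Max_eqI[symmetric]) auto
  finally show ?thesis .
qed

lemma opt_sw_pos: "common_game n S u \<Longrightarrow> opt_sw n S u > 0"
proof -
  assume game: "common_game n S u"
  then obtain s where "s \<in> profiles n S" "u s > 0"
    using common_game_obtains_maximizer by blast
  moreover have "n \<ge> 1" using game by (simp add: common_game_def)
  ultimately have "0 < sw n u s" by (simp add: sw_eq_mult)
  also have "sw n u s \<le> opt_sw n S u"
    unfolding opt_sw_def using \<open>s \<in> profiles n S\<close> common_game_finite_profiles[OF game]
    by (intro Max_ge) auto
  finally show ?thesis .
qed

lemma PoS_eq_1: "common_game n S u \<Longrightarrow> PoS n S u = 1"
  unfolding PoS_def using Max_sw_eq_opt_sw[OF _ order.refl NE_subset_profiles] opt_sw_pos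
  by (metis less_irrefl divide_self)

lemma PoTS_eq_1: "common_game n S u \<Longrightarrow> PoTS n S u = 1"
  unfolding PoTS_def using Max_sw_eq_opt_sw[OF _ NE_subset_TNE TNE_subset_profiles] opt_sw_pos
  by (metis less_irrefl divide_self)

lemma PoTA_le_PoSTA:
  assumes game: "common_game n S u" and "STNE n S u \<noteq> {}"
  shows "PoTA n S u \<le> PoSTA n S u"
proof -
  have "finite (TNE n S u)"
    using finite_subset[OF TNE_subset_profiles common_game_finite_profiles[OF game]] .
  then have "Min (sw n u ` TNE n S u) \<le> Min (sw n u ` STNE n S u)"
    using assms(2) by (intro Min_antimono image_mono STNE_subset_TNE) auto
  then show ?thesis
    unfolding PoTA_def PoSTA_def using opt_sw_pos[OF game] by (simp add: divide_right_mono)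
qed

definition binary :: "nat \<Rightarrow> nat set" where
  "binary i = {0, 1}"

text \<open>Profiles are extensional functions, hence the value undefined off the two players.\<close>

definition pair_profile :: "nat \<Rightarrow> nat \<Rightarrow> nat \<Rightarrow> nat" where
  "pair_profile a b = (\<lambda>k. undefined)(0 := a, 1 := b)"

definition coordination :: "real \<Rightarrow> (nat \<Rightarrow> nat) \<Rightarrow> real" where
  "coordination e s = (if s 0 = s 1 then if s 0 = 0 then 1 else e else 0)"

lemma pair_profile_simps [simp]:
  "pair_profile a b 0 = a" "pair_profile a b 1 = b" "pair_profile a b (Suc 0) = b"
  "(pair_profile a b)(0 := c) = pair_profile c b"
  "(pair_profile a b)(1 := c) = pair_profile a c" "(pair_profile a b)(Suc 0 := c) = pair_profile a c"
  by (auto simp: pair_profile_def fun_eq_iff)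

lemma pair_profile_in_profiles: "a \<in> {0, 1} \<Longrightarrow> b \<in> {0, 1} \<Longrightarrow> pair_profile a b \<in> profiles 2 binary"
  unfolding profiles_def PiE_def extensional_def binary_def
  by (auto simp: pair_profile_def less_2_cases_iff)

lemma finite_profiles_binary: "finite (profiles 2 binary)"
  unfolding profiles_def binary_def by (intro finite_PiE) auto

lemma coordination_common_game:
  assumes "0 \<le> e" shows "common_game 2 binary (coordination e)"
proof -
  have "coordination e (pair_profile 0 0) \<le> Max (coordination e ` profiles 2 binary)"
    using finite_profiles_binary pair_profile_in_profiles[of 0 0] by (intro Max_ge) auto
  then show ?thesis
    unfolding common_game_def using assms by (simp add: binary_def coordination_def)
qed

lemma opt_sw_coordination:
  assumes "e \<le> 1" shows "opt_sw 2 binary (coordination e) = 2"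
  unfolding opt_sw_def using assms finite_profiles_binary pair_profile_in_profiles[of 0 0]
  by (intro Max_eqI) (auto simp: sw_eq_mult coordination_def intro: rev_image_eqI)

lemma diagonal_in_NE_coordination:
  assumes "0 \<le> e" "a \<in> {0, 1}" shows "pair_profile a a \<in> NE 2 binary (coordination e)"
  unfolding NE_def using assms pair_profile_in_profiles[of a a]
  by (auto simp: less_2_cases_iff binary_def coordination_def)

lemma NE_coordination_diagonal:
  assumes "0 < e" "s \<in> NE 2 binary (coordination e)" shows "s 0 = s 1"
proof (rule ccontr)
  assume off_diagonal: "s 0 \<noteq> s 1"
  have "s \<in> profiles 2 binary" using assms(2) NE_subset_profiles by blast
  then have "s 1 \<in> binary 1" unfolding profiles_def by (rule PiE_mem) simp
  then have "s 1 \<in> binary 0" by (simp add: binary_def)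
  then have "coordination e (s(0 := s 1)) \<le> coordination e s"
    using assms(2) unfolding NE_def by auto
  with off_diagonal assms(1) show False by (auto simp: coordination_def split: if_splits)
qed

lemma PoA_coordination:
  assumes "0 < e" "e \<le> 1" shows "PoA 2 binary (coordination e) = e"
proof -
  have "finite (NE 2 binary (coordination e))"
    using finite_subset[OF NE_subset_profiles finite_profiles_binary] .
  moreover have "sw 2 (coordination e) (pair_profile 1 1) \<le> sw 2 (coordination e) s"
    if "s \<in> NE 2 binary (coordination e)" for s
    using NE_coordination_diagonal[OF assms(1) that] assms by (simp add: sw_eq_mult coordination_def)
  ultimately have "Min (sw 2 (coordination e) ` NE 2 binary (coordination e))
      = sw 2 (coordination e) (pair_profile 1 1)"
    using diagonal_in_NE_coordination[of e 1] assms(1) by (intro Min_eqI) auto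
  then show ?thesis
    unfolding PoA_def opt_sw_coordination[OF assms(2)] by (simp add: sw_eq_mult coordination_def)
qed

lemma BR_coordination:
  assumes "0 < e" "a \<in> {0, 1}" "b \<in> {0, 1}"
  shows "BR binary (coordination e) 0 (pair_profile a b) = {b}"
    and "BR binary (coordination e) 1 (pair_profile a b) = {a}"
  using assms unfolding BR_def binary_def coordination_def by auto

lemma miscoordination_in_STNE:
  assumes "0 < e" shows "pair_profile 0 1 \<in> STNE 2 binary (coordination e)"
proof -
  have "pair_profile 0 1 \<in> TNE 2 binary (coordination e)"
    unfolding TNE_def
  proof (intro CollectI conjI allI impI pair_profile_in_profiles)
    fix i :: nat assume "i < 2"
    then show "\<exists>d\<in>NE 2 binary (coordination e). pair_profile 0 1 i = d i"
      using diagonal_in_NE_coordination[of e i] assms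
      by (intro bexI[of _ "pair_profile i i"]) (auto simp: less_2_cases_iff)
  qed simp_all
  then show ?thesis
    unfolding STNE_def using BR_coordination[OF assms] by (auto simp: less_2_cases_iff)
qed

lemma PoSTA_coordination:
  assumes "0 < e" shows "PoSTA 2 binary (coordination e) = 0"
proof -
  have "finite (STNE 2 binary (coordination e))"
    using finite_subset[OF STNE_subset_TNE finite_subset[OF TNE_subset_profiles finite_profiles_binary]] .
  then have "Min (sw 2 (coordination e) ` STNE 2 binary (coordination e)) = 0"
    using miscoordination_in_STNE[OF assms] assms
    by (intro Min_eqI) (auto simp: sw_eq_mult coordination_def intro: rev_image_eqI)
  then show ?thesis by (simp add: PoSTA_def)
qed

theorem proposition3:
  shows "(\<forall>(n::nat) (S::nat \<Rightarrow> 'a set) u. common_game n S u \<longrightarrow>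
            PoS n S u = 1 \<and> PoTS n S u = 1)
       \<and> (\<forall>\<epsilon>::real. \<epsilon> > 0 \<longrightarrow>
            (\<exists>(n::nat) (S::nat \<Rightarrow> nat set) u. common_game n S u \<and> PoA n S u < \<epsilon>))
       \<and> (\<forall>\<delta>::real. \<delta> > 0 \<longrightarrow>
            (\<exists>(n::nat) (S::nat \<Rightarrow> nat set) u. common_game n S u \<and> PoA n S u > 0
               \<and> PoTA n S u \<le> PoSTA n S u \<and> PoSTA n S u \<le> \<delta> * PoA n S u))"
proof (intro conjI allI impI)
  show "PoS n S u = 1" "PoTS n S u = 1" if "common_game n S u" for n and S :: "nat \<Rightarrow> 'a set" and u
    using that by (simp_all add: PoS_eq_1 PoTS_eq_1)
next
  fix \<epsilon> :: real assume "\<epsilon> > 0"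
  define e where "e = min \<epsilon> 1 / 2"
  have "0 < e" "e \<le> 1" "e < \<epsilon>" using \<open>\<epsilon> > 0\<close> by (auto simp: e_def)
  then have "common_game 2 binary (coordination e) \<and> PoA 2 binary (coordination e) < \<epsilon>"
    by (simp add: coordination_common_game PoA_coordination)
  then show "\<exists>n (S :: nat \<Rightarrow> nat set) u. common_game n S u \<and> PoA n S u < \<epsilon>" by blast
next
  fix \<delta> :: real assume "\<delta> > 0"
  have game: "common_game 2 binary (coordination 1)"
    by (simp add: coordination_common_game)
  have "PoTA 2 binary (coordination 1) \<le> PoSTA 2 binary (coordination 1)"
    by (rule PoTA_le_PoSTA[OF game]) (use miscoordination_in_STNE[of 1] in auto)
  moreover have "PoA 2 binary (coordination 1) = 1"
    by (rule PoA_coordination) simp_all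
  moreover have "PoSTA 2 binary (coordination 1) = 0"
    by (rule PoSTA_coordination) simp
  ultimately have "PoA 2 binary (coordination 1) > 0
      \<and> PoTA 2 binary (coordination 1) \<le> PoSTA 2 binary (coordination 1)
      \<and> PoSTA 2 binary (coordination 1) \<le> \<delta> * PoA 2 binary (coordination 1)"
    using \<open>\<delta> > 0\<close> by simp
  with game show "\<exists>n (S :: nat \<Rightarrow> nat set) u. common_game n S u \<and> PoA n S u > 0
      \<and> PoTA n S u \<le> PoSTA n S u \<and> PoSTA n S u \<le> \<delta> * PoA n S u"
    by (intro exI[of _ 2] exI[of _ binary] exI[of _ "coordination 1"]) simp
qed

end
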